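(* Let $n$ decision-making units (DMUs), indexed by $J=\{1,\dots,n\}$, each use $m$ inputs (indexed by $I$) and produce $s$ outputs (indexed by $R$), with $n\ge 2(m+s)$ and all observed data $x_{ij}>0$, $y_{rj}>0$. Fix $o\in J$. For a goal price $\tau_o>0$, the TVG (primal) program of the PT model is $$\Delta_o^{PT}=\min_{v_o,u_o}\ \sum_{i\in I}v_{io}x_{io}-\sum_{r\in R}u_{ro}y_{ro}$$ subject to $\sum_{i\in I}v_{io}x_{ij}-\sum_{r\in R}u_{ro}y_{rj}\ge 0$ for all $j\in J$, $x_{io}v_{io}\ge\tau_o$ for all $i\in I$, $y_{ro}u_{ro}\ge\tau_o$ for all $r\in R$, with $v_o,u_o$ free. Let $(v_o^\#,u_o^\#)$ be an optimal solution for $\tau_o=1$ (Step I), put $\bar t=1/\sum_{i}v^\#_{io}x_{io}$ and let $(v_o^\star,u_o^\star)=\bar t\,(v_o^\#,u_o^\#)$ be the Step II solution (goal price $\tau_o=\bar t$). Let $\alpha_o^\star=\sum_i v^\star_{io}x_{io}$, $\beta_o^\star=\sum_r u^\star_{ro}y_{ro}$, and define the PT efficiency $E_o^{PT\star}=\beta_o^\star/\alpha_o^\star$ and PT inefficiency $F_o^{PT\star}=1-E_o^{PT\star}=(\alpha_o^\star-\beta_o^\star)/\alpha_o^\star$. Then $0\le E_o^{PT\star}\le 1$ and $0\le F_o^{PT\star}\le 1$.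
   Context: The associated TAP (dual) program of the PT model is $\max\sum_{i}Q_{io}\tau_o+\sum_r P_{ro}\tau_o$ subject to $\sum_{j}x_{ij}\pi_{jo}+Q_{io}x_{io}=x_{io}$ ($i\in I$), $-\sum_j y_{rj}\pi_{jo}+P_{ro}y_{ro}=-y_{ro}$ ($r\in R$), $\pi_o,Q_o,P_o\ge 0$. Quantities such as $v_{io}x_{io}$ are called virtual prices (in a virtual currency \$); $\alpha_o^\star$ and $\beta_o^\star$ are the pure virtual input and pure virtual output of the evaluated DMU-$o$. *)

theory Defs
  imports Complex_Main
begin

text \<open>Multipliers v, u are
  functions on indices (only values on I resp. R matter); they are free (real).\<close>

definition TVG_obj ::
  "(nat \<Rightarrow> nat \<Rightarrow> real) \<Rightarrow> (nat \<Rightarrow> nat \<Rightarrow> real) \<Rightarrow> nat set \<Rightarrow> nat set \<Rightarrow> nat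
   \<Rightarrow> (nat \<Rightarrow> real) \<Rightarrow> (nat \<Rightarrow> real) \<Rightarrow> real" where
  "TVG_obj x y I R k v u = (\<Sum>i\<in>I. v i * x i k) - (\<Sum>r\<in>R. u r * y r k)"

definition TVG_feasible ::
  "(nat \<Rightarrow> nat \<Rightarrow> real) \<Rightarrow> (nat \<Rightarrow> nat \<Rightarrow> real) \<Rightarrow> nat set \<Rightarrow> nat set \<Rightarrow> nat set
   \<Rightarrow> nat \<Rightarrow> real \<Rightarrow> (nat \<Rightarrow> real) \<Rightarrow> (nat \<Rightarrow> real) \<Rightarrow> bool" where
  "TVG_feasible x y I R J k \<tau> v u \<longleftrightarrow>
     (\<forall>j\<in>J. (\<Sum>i\<in>I. v i * x i j) - (\<Sum>r\<in>R. u r * y r j) \<ge> 0) \<and>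
     (\<forall>i\<in>I. x i k * v i \<ge> \<tau>) \<and>
     (\<forall>r\<in>R. y r k * u r \<ge> \<tau>)"

definition TVG_optimal ::
  "(nat \<Rightarrow> nat \<Rightarrow> real) \<Rightarrow> (nat \<Rightarrow> nat \<Rightarrow> real) \<Rightarrow> nat set \<Rightarrow> nat set \<Rightarrow> nat set
   \<Rightarrow> nat \<Rightarrow> real \<Rightarrow> (nat \<Rightarrow> real) \<Rightarrow> (nat \<Rightarrow> real) \<Rightarrow> bool" where
  "TVG_optimal x y I R J k \<tau> v u \<longleftrightarrow>
     TVG_feasible x y I R J k \<tau> v u \<and>
     (\<forall>v' u'. TVG_feasible x y I R J k \<tau> v' u' \<longrightarrow>
        TVG_obj x y I R k v u \<le> TVG_obj x y I R k v' u')"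

end

theory Submission
  imports Defs
begin

text \<open>Rescaling the Step I solution by \<open>t\<^sub>b\<^sub>a\<^sub>r\<close> does not change the ratio of pure virtual
  output to pure virtual input, so \<open>E\<^sub>o\<^sup>P\<^sup>T\<^sup>\<star> = \<beta>\<^sup># / \<alpha>\<^sup>#\<close>. Feasibility alone then suffices:
  the constraint for \<open>j = o\<close> gives \<open>\<beta>\<^sup># \<le> \<alpha>\<^sup>#\<close>, and the goal-price constraints make every
  virtual output price \<open>u\<^sub>r\<^sub>o y\<^sub>r\<^sub>o\<close> positive, so \<open>0 \<le> \<beta>\<^sup>#\<close>.\<close>

lemma TVG_feasible_virtual_output_bounds:
  assumes feasible: "TVG_feasible x y I R J k \<tau> v u"
    and "k \<in> J" and "0 \<le> \<tau>"
  shows "0 \<le> (\<Sum>r\<in>R. u r * y r k)"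
    and "(\<Sum>r\<in>R. u r * y r k) \<le> (\<Sum>i\<in>I. v i * x i k)"
proof -
  have "\<forall>r\<in>R. \<tau> \<le> y r k * u r"
    using feasible unfolding TVG_feasible_def by blast
  then show "0 \<le> (\<Sum>r\<in>R. u r * y r k)"
    using \<open>0 \<le> \<tau>\<close> by (intro sum_nonneg) (auto simp: mult.commute)
  show "(\<Sum>r\<in>R. u r * y r k) \<le> (\<Sum>i\<in>I. v i * x i k)"
    using feasible \<open>k \<in> J\<close> unfolding TVG_feasible_def by auto
qed

lemma ratio_of_scaled_sums:
  fixes t :: real
  assumes "t = 1 / (\<Sum>i\<in>I. v i * x i)"
  shows "(\<Sum>r\<in>R. t * u r * y r) / (\<Sum>i\<in>I. t * v i * x i)
           = (\<Sum>r\<in>R. u r * y r) / (\<Sum>i\<in>I. v i * x i)"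
proof -
  have "(\<Sum>r\<in>R. t * u r * y r) = t * (\<Sum>r\<in>R. u r * y r)"
    and "(\<Sum>i\<in>I. t * v i * x i) = t * (\<Sum>i\<in>I. v i * x i)"
    by (simp_all add: sum_distrib_left mult.assoc)
  \<comment> \<open>if the input sum vanishes then so does \<open>t\<close>, and both ratios are \<open>0\<close> by \<open>x / 0 = 0\<close>\<close>
  then show ?thesis
    using assms by (cases "t = 0") simp_all
qed

theorem theorem1:
  fixes m s n :: nat and x y :: "nat \<Rightarrow> nat \<Rightarrow> real" and k :: nat
    and vh uh :: "nat \<Rightarrow> real"
  assumes size: "n \<ge> 2 * (m + s)"
    and xpos: "\<forall>i\<in>{1..m}. \<forall>j\<in>{1..n}. x i j > 0"
    and ypos: "\<forall>r\<in>{1..s}. \<forall>j\<in>{1..n}. y r j > 0"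
    and o_in: "k \<in> {1..n}"
    and stepI: "TVG_optimal x y {1..m} {1..s} {1..n} k 1 vh uh"
  shows
    "let tbar = 1 / (\<Sum>i\<in>{1..m}. vh i * x i k);
         vs = (\<lambda>i. tbar * vh i);
         us = (\<lambda>r. tbar * uh r);
         \<alpha> = (\<Sum>i\<in>{1..m}. vs i * x i k);
         \<beta> = (\<Sum>r\<in>{1..s}. us r * y r k);
         E = \<beta> / \<alpha>;
         F = 1 - E
     in 0 \<le> E \<and> E \<le> 1 \<and> 0 \<le> F \<and> F \<le> 1"
proof -
  define tbar where "tbar = 1 / (\<Sum>i\<in>{1..m}. vh i * x i k)"
  define E where "E = (\<Sum>r\<in>{1..s}. uh r * y r k) / (\<Sum>i\<in>{1..m}. vh i * x i k)"
  have feasible: "TVG_feasible x y {1..m} {1..s} {1..n} k 1 vh uh"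
    using stepI unfolding TVG_optimal_def by blast
  have E_scaled: "(\<Sum>r\<in>{1..s}. tbar * uh r * y r k) / (\<Sum>i\<in>{1..m}. tbar * vh i * x i k) = E"
    unfolding E_def by (rule ratio_of_scaled_sums) (simp add: tbar_def)
  have "0 \<le> E" "E \<le> 1"
    unfolding E_def
    using TVG_feasible_virtual_output_bounds[OF feasible o_in] by (auto simp: divide_le_eq_1)
  then show ?thesis
    unfolding Let_def tbar_def[symmetric] E_scaled by simp
qed

end
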